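(* Let $(\mathbb{S},\Sigma)$ be a measurable space, let $\{\mu_n\}_{n=1,2,\ldots}$ be finite measures on $(\mathbb{S},\Sigma)$ converging in total variation to a finite measure $\mu$, and let $f,f_n$ ($n=1,2,\ldots$) be measurable $[-\infty,+\infty]$-valued functions on $\mathbb{S}$ with $f\in L^1(\mathbb{S};\mu)$ and $f_n\in L^1(\mathbb{S};\mu_n)$ for each $n$. Then $$\liminf_{n\to\infty}\inf_{C\in\Sigma}\Big(\int_C f_n(s)\,\mu_n(ds)-\int_C f(s)\,\mu(ds)\Big)\ge 0$$ if and only if both of the following hold: (i) for each $\varepsilon>0$, $\mu(\{s\in\mathbb{S}: f_n(s)\le f(s)-\varepsilon\})\to 0$ as $n\to\infty$; (ii) $\{f_n^-\}_{n=1,2,\ldots}$ is asymptotically uniformly integrable with respect to $\{\mu_n\}_{n=1,2,\ldots}$.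
   Context: $f^-=-\min\{f,0\}$. A sequence $\{h_n\}$ is asymptotically uniformly integrable with respect to $\{\mu_n\}$ if $\lim_{K\to+\infty}\limsup_{n\to\infty}\int_{\mathbb{S}}|h_n|\,\mathbf{1}\{|h_n|\ge K\}\,d\mu_n=0$. *)

theory Defs
  imports "HOL-Analysis.Analysis"
begin

definition tv_converges :: "(nat \<Rightarrow> 'a measure) \<Rightarrow> 'a measure \<Rightarrow> bool" where
  "tv_converges M \<mu> \<longleftrightarrow>
     (\<lambda>n. SUP C\<in>sets \<mu>. \<bar>measure (M n) C - measure \<mu> C\<bar>) \<longlonglongrightarrow> 0"

definition ereal_L1 :: "'a measure \<Rightarrow> ('a \<Rightarrow> ereal) \<Rightarrow> bool" where
  "ereal_L1 M f \<longleftrightarrow> f \<in> borel_measurable M \<and> (\<integral>\<^sup>+ x. e2ennreal \<bar>f x\<bar> \<partial>M) < \<infinity>"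

text \<open>Integral of an integrable extended-real function over C (finite a.e., so the real part suffices).\<close>
definition ereal_set_integral :: "'a measure \<Rightarrow> 'a set \<Rightarrow> ('a \<Rightarrow> ereal) \<Rightarrow> real" where
  "ereal_set_integral M C f = (LINT x:C|M. real_of_ereal (f x))"

definition neg_part :: "('a \<Rightarrow> ereal) \<Rightarrow> 'a \<Rightarrow> ereal" where
  "neg_part f x = - min (f x) 0"

definition asymp_unif_integrable :: "(nat \<Rightarrow> 'a measure) \<Rightarrow> (nat \<Rightarrow> 'a \<Rightarrow> ereal) \<Rightarrow> bool" where
  "asymp_unif_integrable M h \<longleftrightarrow>
     ((\<lambda>K::real. limsup (\<lambda>n. \<integral>\<^sup>+ x \<in> {x \<in> space (M n). \<bar>h n x\<bar> \<ge> ereal K}.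
                                 e2ennreal \<bar>h n x\<bar> \<partial>(M n))) \<longlongrightarrow> 0) at_top"

end

theory Submission
  imports Defs
begin

text \<open>Replace the integrands, which are finite almost everywhere, by their real parts
  \<open>g\<^sub>n\<close> and \<open>f\<close>, and let \<open>gap\<^sub>n(C) = \<integral>\<^sub>C g\<^sub>n d\<mu>\<^sub>n - \<integral>\<^sub>C f d\<mu>\<close>.
  Convergence in total variation makes the integrals of a bounded function against \<open>\<mu>\<^sub>n\<close> and
  \<open>\<mu>\<close> uniformly close (via a layer-cake decomposition), and integrability of \<open>f\<close> makes
  \<open>|f| \<le> L\<close> outside a set carrying little of its integral.
  If the gaps are asymptotically \<open>\<ge> 0\<close> uniformly in \<open>C\<close>, the gap on
  \<open>{g\<^sub>n \<le> f - \<epsilon>, |f| \<le> L}\<close> is about \<open>-\<epsilon>\<close> times its \<open>\<mu>\<^sub>n\<close>-measure, which forces (i);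
  the gap on \<open>{g\<^sub>n \<le> -K}\<close> is \<open>-\<integral> g\<^sub>n\<^sup>-\<close> there up to the integral of \<open>f\<close> over a set
  that Markov's inequality makes of measure \<open>O(1/K)\<close>, which gives (ii).
  Conversely, any \<open>C\<close> splits into the part where \<open>g\<^sub>n \<ge> f - \<eta>\<close> and \<open>|f| \<le> L\<close>, on which the
  gap is at least about \<open>-\<eta>\<close> times its measure, and a rest of small \<open>\<mu>\<close>-measure, on which
  \<open>g\<^sub>n\<close> loses at most its tail below \<open>-K\<close> plus \<open>K\<close> times the measure.\<close>

section \<open>Bounded integrands under total variation\<close>

lemma tv_convergesD:
  assumes "tv_converges M \<mu>" "\<And>n. finite_measure (M n)" "finite_measure \<mu>" "0 < e"
  shows "\<forall>\<^sub>F n in sequentially. \<forall>C\<in>sets \<mu>. \<bar>measure (M n) C - measure \<mu> C\<bar> \<le> e"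
proof -
  have "\<forall>\<^sub>F n in sequentially. (SUP C\<in>sets \<mu>. \<bar>measure (M n) C - measure \<mu> C\<bar>) < e"
    using assms(1,4) unfolding tv_converges_def by (rule order_tendstoD(2))
  then show ?thesis
  proof eventually_elim
    case (elim n)
    have "\<bar>measure (M n) C - measure \<mu> C\<bar> \<le> measure (M n) (space (M n)) + measure \<mu> (space \<mu>)" for C
      using finite_measure.bounded_measure[OF assms(2), of n C] finite_measure.bounded_measure[OF assms(3), of C]
        measure_nonneg[of "M n" C] measure_nonneg[of \<mu> C]
      by linarith
    then have "bdd_above ((\<lambda>C. \<bar>measure (M n) C - measure \<mu> C\<bar>) ` sets \<mu>)"
      by (rule bdd_aboveI2)
    then show ?case
      using elim cSUP_upper[of _ "sets \<mu>" "\<lambda>C. \<bar>measure (M n) C - measure \<mu> C\<bar>"] by fastforce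
  qed
qed

lemma of_int_floor_divide_eq_sum_steps:
  fixes y :: real
  assumes "0 < \<delta>" "0 \<le> y" "y < \<delta> * (real N + 1)"
  shows "of_int \<lfloor>y / \<delta>\<rfloor> = (\<Sum>t<N. if \<delta> * (real t + 1) \<le> y then 1 else 0 :: real)"
proof -
  have "y / \<delta> < real N + 1" "0 \<le> y / \<delta>"
    using assms by (simp_all add: field_simps)
  then have "nat \<lfloor>y / \<delta>\<rfloor> \<le> N"
    by linarith
  have step_iff: "\<delta> * (real t + 1) \<le> y \<longleftrightarrow> t < nat \<lfloor>y / \<delta>\<rfloor>" for t
  proof -
    have "\<delta> * (real t + 1) \<le> y \<longleftrightarrow> real t + 1 \<le> y / \<delta>"
      using \<open>0 < \<delta>\<close> by (simp add: pos_le_divide_eq mult.commute)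
    then show ?thesis
      by linarith
  qed
  have "{t. t < N \<and> \<delta> * (real t + 1) \<le> y} = {..<nat \<lfloor>y / \<delta>\<rfloor>}"
    using \<open>nat \<lfloor>y / \<delta>\<rfloor> \<le> N\<close> by (auto simp: step_iff)
  then have "(\<Sum>t<N. if \<delta> * (real t + 1) \<le> y then 1 else 0 :: real) = real (nat \<lfloor>y / \<delta>\<rfloor>)"
    by (simp add: sum.If_cases Int_def)
  then show ?thesis
    using \<open>0 \<le> y / \<delta>\<close> by simp
qed

lemma abs_integral_diff_le_if_sandwich:
  fixes h s :: "'a \<Rightarrow> real"
  assumes "finite_measure N" "integrable N h" "integrable N s"
    and sandwich: "\<And>x. x \<in> space N \<Longrightarrow> s x \<le> h x \<and> h x \<le> s x + \<delta>"
  shows "\<bar>(\<integral>x. h x \<partial>N) - (\<integral>x. s x \<partial>N)\<bar> \<le> \<delta> * measure N (space N)"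
proof -
  interpret finite_measure N by fact
  have "(\<integral>x. h x - s x \<partial>N) \<le> (\<integral>x. \<delta> \<partial>N)"
    using assms(2,3) sandwich by (intro integral_mono) (auto simp: algebra_simps)
  moreover have "0 \<le> (\<integral>x. h x - s x \<partial>N)"
    using sandwich by (intro integral_nonneg_AE AE_I2) simp
  ultimately show ?thesis
    using assms(2,3) by (simp add: mult.commute)
qed

text \<open>A discrete layer-cake formula: the staircase \<open>\<delta> * \<lfloor>h x / \<delta>\<rfloor>\<close> lies within \<open>\<delta>\<close> below \<open>h\<close>
  and is a sum of \<open>\<delta>\<close> times the indicators of the level sets of \<open>h\<close>.\<close>

lemma integral_staircase_approx:
  fixes h :: "'a \<Rightarrow> real"
  assumes "finite_measure N" and h[measurable]: "h \<in> borel_measurable N" and "0 < \<delta>"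
    and bounds: "\<And>x. x \<in> space N \<Longrightarrow> 0 \<le> h x \<and> h x < \<delta> * (real K + 1)"
  shows "\<bar>(\<integral>x. h x \<partial>N) - \<delta> * (\<Sum>t<K. measure N {x\<in>space N. \<delta> * (real t + 1) \<le> h x})\<bar>
    \<le> \<delta> * measure N (space N)"
proof -
  interpret finite_measure N by fact
  define level where "level t = {x\<in>space N. \<delta> * (real t + 1) \<le> h x}" for t
  define s where "s x = \<delta> * (\<Sum>t<K. indicator (level t) x)" for x
  have [measurable]: "level t \<in> sets N" for t
    unfolding level_def by measurable
  have s_floor: "s x = \<delta> * of_int \<lfloor>h x / \<delta>\<rfloor>" if "x \<in> space N" for x
  proof -
    have "(\<Sum>t<K. indicator (level t) x) = (\<Sum>t<K. if \<delta> * (real t + 1) \<le> h x then 1 else 0 :: real)"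
      by (intro sum.cong refl) (simp add: level_def that)
    then show ?thesis
      using of_int_floor_divide_eq_sum_steps[OF \<open>0 < \<delta>\<close>, of "h x" K] bounds[OF that] by (simp add: s_def)
  qed
  have "\<bar>h x\<bar> \<le> \<delta> * (real K + 1)" if "x \<in> space N" for x
    using bounds[OF that] by simp
  then have int_h: "integrable N h"
    by (intro integrable_const_bound[where B = "\<delta> * (real K + 1)"] AE_I2) auto
  have int_s: "integrable N s"
    unfolding s_def
    by (intro integrable_mult_right Bochner_Integration.integrable_sum integrable_real_indicator)
      (auto simp: less_top[symmetric])
  have "level t \<inter> space N = level t" for t
    by (auto simp: level_def)
  then have "(\<integral>x. s x \<partial>N) = \<delta> * (\<Sum>t<K. measure N (level t))"
    unfolding s_def by (simp add: Bochner_Integration.integral_sum less_top[symmetric])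
  moreover have "\<bar>(\<integral>x. h x \<partial>N) - (\<integral>x. s x \<partial>N)\<bar> \<le> \<delta> * measure N (space N)"
  proof (rule abs_integral_diff_le_if_sandwich[OF \<open>finite_measure N\<close> int_h int_s])
    fix x assume "x \<in> space N"
    then show "s x \<le> h x \<and> h x \<le> s x + \<delta>"
      using mult_left_mono[OF of_int_floor_le[of "h x / \<delta>"], of \<delta>]
        mult_strict_left_mono[OF real_of_int_floor_add_one_gt[of "h x / \<delta>"] \<open>0 < \<delta>\<close>] \<open>0 < \<delta>\<close>
      by (simp add: s_floor distrib_left)
  qed
  ultimately show ?thesis
    by (simp add: level_def)
qed

lemma abs_integral_diff_le_staircase_error:
  fixes h :: "'a \<Rightarrow> real"
  assumes N1: "finite_measure N1" and N2: "finite_measure N2" and sets_eq: "sets N1 = sets N2"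
    and h[measurable]: "h \<in> borel_measurable N1"
    and bounds: "\<And>x. x \<in> space N1 \<Longrightarrow> 0 \<le> h x \<and> h x \<le> B"
    and close: "\<And>A. A \<in> sets N1 \<Longrightarrow> \<bar>measure N1 A - measure N2 A\<bar> \<le> e"
    and "0 \<le> B" "0 < \<delta>"
  shows "\<bar>(\<integral>x. h x \<partial>N1) - (\<integral>x. h x \<partial>N2)\<bar>
    \<le> B * e + \<delta> * measure N1 (space N1) + \<delta> * measure N2 (space N2)"
proof -
  define K where "K = nat \<lfloor>B / \<delta>\<rfloor>"
  have "real K = of_int \<lfloor>B / \<delta>\<rfloor>"
    using \<open>0 \<le> B\<close> \<open>0 < \<delta>\<close> by (simp add: K_def)
  then have "B < \<delta> * (real K + 1)" "\<delta> * real K \<le> B"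
    using mult_strict_left_mono[OF real_of_int_floor_add_one_gt[of "B / \<delta>"] \<open>0 < \<delta>\<close>]
      mult_left_mono[OF of_int_floor_le[of "B / \<delta>"], of \<delta>] \<open>0 < \<delta>\<close>
    by (simp_all add: distrib_left)
  define level where "level t = {x\<in>space N1. \<delta> * (real t + 1) \<le> h x}" for t
  have space_eq: "space N2 = space N1"
    using sets_eq_imp_space_eq[OF sets_eq] by simp
  have "\<bar>(\<integral>x. h x \<partial>N1) - \<delta> * (\<Sum>t<K. measure N1 (level t))\<bar> \<le> \<delta> * measure N1 (space N1)"
    unfolding level_def using bounds \<open>B < \<delta> * (real K + 1)\<close>
    by (intro integral_staircase_approx[OF N1 h \<open>0 < \<delta>\<close>]) fastforce
  moreover have "\<bar>(\<integral>x. h x \<partial>N2) - \<delta> * (\<Sum>t<K. measure N2 (level t))\<bar> \<le> \<delta> * measure N2 (space N2)"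
    unfolding level_def space_eq[symmetric] using bounds \<open>B < \<delta> * (real K + 1)\<close>
    by (intro integral_staircase_approx[OF N2 _ \<open>0 < \<delta>\<close>])
      (auto simp: measurable_cong_sets[OF sets_eq[symmetric] refl] space_eq intro: order.strict_trans1)
  moreover have "\<bar>\<delta> * (\<Sum>t<K. measure N1 (level t)) - \<delta> * (\<Sum>t<K. measure N2 (level t))\<bar> \<le> B * e"
  proof -
    have "\<bar>\<Sum>t<K. measure N1 (level t) - measure N2 (level t)\<bar> \<le> (\<Sum>t<K. e)"
      by (rule order.trans[OF sum_abs sum_mono]) (simp add: close level_def)
    then have "\<delta> * \<bar>\<Sum>t<K. measure N1 (level t) - measure N2 (level t)\<bar> \<le> (\<delta> * real K) * e"
      using \<open>0 < \<delta>\<close> by (simp add: mult.assoc)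
    also have "\<dots> \<le> B * e"
      using \<open>\<delta> * real K \<le> B\<close> close[of "{}"] by (simp add: mult_right_mono)
    finally show ?thesis
      using \<open>0 < \<delta>\<close> by (simp add: sum_subtractf abs_mult flip: right_diff_distrib)
  qed
  ultimately show ?thesis
    by linarith
qed

lemma abs_integral_diff_le_nonneg_bounded:
  fixes h :: "'a \<Rightarrow> real"
  assumes "finite_measure N1" "finite_measure N2" "sets N1 = sets N2" "h \<in> borel_measurable N1"
    and "\<And>x. x \<in> space N1 \<Longrightarrow> 0 \<le> h x \<and> h x \<le> B"
    and "\<And>A. A \<in> sets N1 \<Longrightarrow> \<bar>measure N1 A - measure N2 A\<bar> \<le> e"
    and "0 \<le> B"
  shows "\<bar>(\<integral>x. h x \<partial>N1) - (\<integral>x. h x \<partial>N2)\<bar> \<le> B * e"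
proof (rule field_le_epsilon)
  fix d :: real assume "0 < d"
  define S where "S = measure N1 (space N1) + measure N2 (space N2) + 1"
  have "0 < S"
    unfolding S_def using measure_nonneg[of N1 "space N1"] measure_nonneg[of N2 "space N2"] by linarith
  have "d / S * measure N1 (space N1) + d / S * measure N2 (space N2) = d / S * (S - 1)"
    by (simp add: S_def distrib_left)
  also have "\<dots> \<le> d / S * S"
    using \<open>0 < d\<close> \<open>0 < S\<close> by (intro mult_left_mono) auto
  finally have "d / S * measure N1 (space N1) + d / S * measure N2 (space N2) \<le> d"
    using \<open>0 < S\<close> by simp
  moreover have "0 < d / S"
    using \<open>0 < d\<close> \<open>0 < S\<close> by simp
  ultimately show "\<bar>(\<integral>x. h x \<partial>N1) - (\<integral>x. h x \<partial>N2)\<bar> \<le> B * e + d"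
    using abs_integral_diff_le_staircase_error[OF assms, of "d / S"] by linarith
qed

lemma abs_integral_diff_le_bounded:
  fixes h :: "'a \<Rightarrow> real"
  assumes N1: "finite_measure N1" and N2: "finite_measure N2" and sets_eq: "sets N1 = sets N2"
    and h[measurable]: "h \<in> borel_measurable N1"
    and bound: "\<And>x. x \<in> space N1 \<Longrightarrow> \<bar>h x\<bar> \<le> B"
    and close: "\<And>A. A \<in> sets N1 \<Longrightarrow> \<bar>measure N1 A - measure N2 A\<bar> \<le> e"
    and "0 \<le> B"
  shows "\<bar>(\<integral>x. h x \<partial>N1) - (\<integral>x. h x \<partial>N2)\<bar> \<le> 2 * B * e"
proof -
  have split: "(\<integral>x. h x \<partial>N) = (\<integral>x. max (h x) 0 \<partial>N) - (\<integral>x. max (- h x) 0 \<partial>N)"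
    if "finite_measure N" "sets N = sets N1" for N
  proof -
    interpret N: finite_measure N by fact
    have "integrable N h"
      using h bound sets_eq_imp_space_eq[OF that(2)]
      by (intro N.integrable_const_bound[where B = B]) (auto simp: measurable_cong_sets[OF that(2) refl])
    then have "(\<integral>x. max (h x) 0 - max (- h x) 0 \<partial>N) = (\<integral>x. max (h x) 0 \<partial>N) - (\<integral>x. max (- h x) 0 \<partial>N)"
      by (intro Bochner_Integration.integral_diff integrable_max) auto
    moreover have "max (h x) 0 - max (- h x) 0 = h x" for x
      by (simp add: max_def)
    ultimately show ?thesis
      by simp
  qed
  have "\<bar>(\<integral>x. max (h x) 0 \<partial>N1) - (\<integral>x. max (h x) 0 \<partial>N2)\<bar> \<le> B * e"
   and "\<bar>(\<integral>x. max (- h x) 0 \<partial>N1) - (\<integral>x. max (- h x) 0 \<partial>N2)\<bar> \<le> B * e"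
    using bound \<open>0 \<le> B\<close>
    by (intro abs_integral_diff_le_nonneg_bounded[OF N1 N2 sets_eq _ _ close \<open>0 \<le> B\<close>];
        force simp: abs_le_iff)+
  then show ?thesis
    using split[OF N1 refl] split[OF N2 sets_eq[symmetric]] by linarith
qed

definition tail_integral :: "'a measure \<Rightarrow> ('a \<Rightarrow> real) \<Rightarrow> real \<Rightarrow> real" where
  "tail_integral M f L = (\<integral>x\<in>{x\<in>space M. L < \<bar>f x\<bar>}. \<bar>f x\<bar> \<partial>M)"

lemma tail_integral_tendsto_0:
  assumes f[measurable]: "integrable M f"
  shows "(tail_integral M f \<longlongrightarrow> 0) at_top"
proof -
  have "((\<lambda>L. \<integral>x. indicator {x\<in>space M. L < \<bar>f x\<bar>} x *\<^sub>R \<bar>f x\<bar> \<partial>M) \<longlongrightarrow> (\<integral>x. 0 \<partial>M)) at_top"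
  proof (rule integral_dominated_convergence_at_top[where w = "\<lambda>x. \<bar>f x\<bar>"])
    show "AE x in M. ((\<lambda>L. indicator {x\<in>space M. L < \<bar>f x\<bar>} x *\<^sub>R \<bar>f x\<bar>) \<longlongrightarrow> 0) at_top"
    proof (intro AE_I2 tendsto_eventually)
      fix x
      show "\<forall>\<^sub>F L in at_top. indicator {x\<in>space M. L < \<bar>f x\<bar>} x *\<^sub>R \<bar>f x\<bar> = 0"
        using eventually_ge_at_top[of "\<bar>f x\<bar>"] by eventually_elim (simp add: indicator_def)
    qed
  qed (use integrable_abs[OF f] in \<open>auto simp: indicator_def\<close>)
  then show ?thesis
    by (simp add: tail_integral_def[abs_def] set_lebesgue_integral_def)
qed

lemma measure_abs_gt_le_tail_integral:
  assumes f[measurable]: "integrable M f" and "0 \<le> L"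
  shows "L * measure M {x\<in>space M. L < \<bar>f x\<bar>} \<le> tail_integral M f L"
proof -
  define A where "A = {x\<in>space M. L < \<bar>f x\<bar>}"
  have [measurable]: "A \<in> sets M"
    unfolding A_def by measurable
  have int_abs: "set_integrable M A (\<lambda>x. \<bar>f x\<bar>)"
    unfolding set_integrable_def by (intro integrable_mult_indicator integrable_abs f) simp
  have int_L: "set_integrable M A (\<lambda>_. L)"
    by (rule set_integrable_bound[OF int_abs]) (use \<open>0 \<le> L\<close> in \<open>auto simp: A_def set_borel_measurable_def\<close>)
  have "(\<integral>x\<in>A. L \<partial>M) \<le> (\<integral>x\<in>A. \<bar>f x\<bar> \<partial>M)"
    by (rule set_integral_mono[OF int_L int_abs]) (simp add: A_def less_imp_le)
  then show ?thesis
    by (simp add: A_def tail_integral_def set_lebesgue_integral_def mult.commute)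
qed

lemma set_integral_abs_le_tail_integral:
  assumes f[measurable]: "integrable M f" and C[measurable]: "C \<in> sets M"
    and "emeasure M C < \<infinity>" and "0 \<le> L"
  shows "(\<integral>x\<in>C. \<bar>f x\<bar> \<partial>M) \<le> tail_integral M f L + L * measure M C"
proof -
  define A where "A = {x\<in>space M. L < \<bar>f x\<bar>}"
  have [measurable]: "A \<in> sets M"
    unfolding A_def by measurable
  have "(\<integral>x. indicator C x * \<bar>f x\<bar> \<partial>M) \<le> (\<integral>x. indicator A x * \<bar>f x\<bar> + indicator C x * L \<partial>M)"
  proof (rule integral_mono)
    show "integrable M (\<lambda>x. indicator C x * \<bar>f x\<bar>)"
      using integrable_mult_indicator[OF C integrable_abs[OF f]] by simp
    show "integrable M (\<lambda>x. indicator A x * \<bar>f x\<bar> + indicator C x * L)"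
      using integrable_mult_indicator[OF _ integrable_abs[OF f], of A] \<open>emeasure M C < \<infinity>\<close> by simp
    show "indicator C x * \<bar>f x\<bar> \<le> indicator A x * \<bar>f x\<bar> + indicator C x * L" if "x \<in> space M" for x
      using that \<open>0 \<le> L\<close> by (auto simp: A_def indicator_def)
  qed
  also have "\<dots> = tail_integral M f L + L * measure M C"
    using integrable_mult_indicator[OF _ integrable_abs[OF f], of A] \<open>emeasure M C < \<infinity>\<close>
    by (simp add: A_def tail_integral_def set_lebesgue_integral_def Int_absorb2 sets.sets_into_space mult.commute)
  finally show ?thesis
    by (simp add: set_lebesgue_integral_def)
qed

lemma abs_set_integral_le_integral_abs:
  fixes h :: "'a \<Rightarrow> real"
  assumes h: "integrable M h" and C[measurable]: "C \<in> sets M"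
  shows "\<bar>\<integral>x\<in>C. h x \<partial>M\<bar> \<le> (\<integral>x. \<bar>h x\<bar> \<partial>M)"
proof -
  have "\<bar>\<integral>x\<in>C. h x \<partial>M\<bar> \<le> (\<integral>x\<in>C. \<bar>h x\<bar> \<partial>M)"
    using set_integral_norm_bound[of M C h] integrable_mult_indicator[OF C h]
    by (simp add: set_integrable_def)
  also have "\<dots> \<le> (\<integral>x. \<bar>h x\<bar> \<partial>M)"
    unfolding set_lebesgue_integral_def
    by (intro integral_mono integrable_mult_indicator C integrable_abs h) (auto simp: indicator_def)
  finally show ?thesis .
qed

lemma measure_mult_le_set_integral:
  fixes h :: "'a \<Rightarrow> real"
  assumes "A \<in> sets N" "emeasure N A < \<infinity>" "set_integrable N A h" "\<And>x. x \<in> A \<Longrightarrow> c \<le> h x"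
  shows "c * measure N A \<le> (\<integral>x\<in>A. h x \<partial>N)"
proof -
  have "set_integrable N A (\<lambda>_. c)"
    using assms(1,2) by (simp add: set_integrable_def)
  then have "(\<integral>x\<in>A. c \<partial>N) \<le> (\<integral>x\<in>A. h x \<partial>N)"
    using assms(3,4) by (rule set_integral_mono)
  then show ?thesis
    using assms(1,2) by (simp add: set_integral_const mult.commute)
qed

lemma set_integral_le_measure_mult:
  fixes h :: "'a \<Rightarrow> real"
  assumes "A \<in> sets N" "emeasure N A < \<infinity>" "set_integrable N A h" "\<And>x. x \<in> A \<Longrightarrow> h x \<le> c"
  shows "(\<integral>x\<in>A. h x \<partial>N) \<le> c * measure N A"
  using measure_mult_le_set_integral[of A N "\<lambda>x. - h x" "- c"] assms
  by (simp add: set_integral_uminus set_integrable_def)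

section \<open>Real-valued integrands\<close>

lemma tendsto_zero_if_eventually_le:
  fixes X :: "nat \<Rightarrow> real"
  assumes "\<And>n. 0 \<le> X n" and small: "\<And>e. 0 < e \<Longrightarrow> \<forall>\<^sub>F n in sequentially. X n \<le> e"
  shows "X \<longlonglongrightarrow> 0"
proof (rule order_tendstoI)
  fix a :: real assume "0 < a"
  then have "\<forall>\<^sub>F n in sequentially. X n \<le> a / 2"
    by (intro small) simp
  then show "\<forall>\<^sub>F n in sequentially. X n < a"
    by eventually_elim (use \<open>0 < a\<close> in simp)
next
  fix a :: real assume "a < 0"
  then show "\<forall>\<^sub>F n in sequentially. a < X n"
    by (intro always_eventually allI) (rule order.strict_trans2[OF _ assms(1)])
qed

text \<open>The theorem for real-valued integrands: \<open>gap n C\<close> below is the difference of integrals whose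
  liminf is taken, and \<open>deficit\<close> and \<open>neg_tail\<close> are the quantities in conditions (i) and (ii).\<close>

locale tv_fatou =
  fixes M :: "nat \<Rightarrow> 'a measure" and \<mu> :: "'a measure"
    and f :: "'a \<Rightarrow> real" and g :: "nat \<Rightarrow> 'a \<Rightarrow> real"
  assumes sets_M: "\<And>n. sets (M n) = sets \<mu>"
    and finite_M: "\<And>n. finite_measure (M n)" and finite_\<mu>: "finite_measure \<mu>"
    and tv: "tv_converges M \<mu>"
    and integrable_f: "integrable \<mu> f" and integrable_g: "\<And>n. integrable (M n) (g n)"
begin

lemma space_M [simp]: "space (M n) = space \<mu>"
  using sets_eq_imp_space_eq[OF sets_M] .

declare sets_M [measurable_cong]

lemma measurable_f [measurable]: "f \<in> borel_measurable \<mu>"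
  using integrable_f by simp

lemma measurable_g [measurable]: "g n \<in> borel_measurable \<mu>"
  using integrable_g[of n] by simp

lemma emeasure_M_finite [simp]: "emeasure (M n) A < top"
  using finite_measure.emeasure_finite[OF finite_M] by (simp add: less_top)

lemma emeasure_\<mu>_finite [simp]: "emeasure \<mu> A < top"
  using finite_measure.emeasure_finite[OF finite_\<mu>] by (simp add: less_top)

lemma set_integrable_f: "C \<in> sets \<mu> \<Longrightarrow> set_integrable \<mu> C f"
  unfolding set_integrable_def by (intro integrable_mult_indicator integrable_f)

lemma set_integrable_g: "C \<in> sets \<mu> \<Longrightarrow> set_integrable (M n) C (g n)"
  unfolding set_integrable_def using integrable_g by (intro integrable_mult_indicator) auto

lemma set_integrable_uminus_g: "C \<in> sets \<mu> \<Longrightarrow> set_integrable (M n) C (\<lambda>x. - g n x)"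
  using set_integrable_g[of C n] by (simp add: set_integrable_def)

lemma set_integrable_M_bounded:
  fixes h :: "'a \<Rightarrow> real"
  assumes "C \<in> sets \<mu>" "h \<in> borel_measurable \<mu>" "\<And>x. x \<in> C \<Longrightarrow> \<bar>h x\<bar> \<le> B"
  shows "set_integrable (M n) C h"
  unfolding set_integrable_def using assms
  by (intro integrableI_bounded_set_indicator[where B = B])
    (auto intro: emeasure_M_finite)

lemma tv_close:
  "0 < e \<Longrightarrow> \<forall>\<^sub>F n in sequentially. \<forall>C\<in>sets \<mu>. \<bar>measure (M n) C - measure \<mu> C\<bar> \<le> e"
  using tv finite_M finite_\<mu> by (rule tv_convergesD)

lemma measure_le_if_close:
  assumes "\<forall>C\<in>sets \<mu>. \<bar>measure (M n) C - measure \<mu> C\<bar> \<le> t" "A \<in> sets \<mu>"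
  shows "measure (M n) A \<le> measure \<mu> A + t" "measure \<mu> A \<le> measure (M n) A + t"
  using bspec[OF assms] by (simp_all add: abs_le_iff)

lemma measure_tendsto_0_if_null:
  assumes "\<And>n. A n \<in> sets \<mu>" "\<And>n. measure (M n) (A n) = 0"
  shows "(\<lambda>n. measure \<mu> (A n)) \<longlonglongrightarrow> 0"
proof (rule tendsto_zero_if_eventually_le)
  fix e :: real assume "0 < e"
  from tv_close[OF this] show "\<forall>\<^sub>F n in sequentially. measure \<mu> (A n) \<le> e"
  proof eventually_elim
    case (elim n)
    show ?case
      using measure_le_if_close(2)[OF elim assms(1)[of n]] assms(2)[of n] by simp
  qed
qed simp

lemma set_integral_f_transfer:
  assumes close: "\<forall>C\<in>sets \<mu>. \<bar>measure (M n) C - measure \<mu> C\<bar> \<le> t"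
    and D[measurable]: "D \<in> sets \<mu>" and bound: "\<And>x. x \<in> D \<Longrightarrow> \<bar>f x\<bar> \<le> L" and "0 \<le> L"
  shows "\<bar>(\<integral>x\<in>D. f x \<partial>M n) - (\<integral>x\<in>D. f x \<partial>\<mu>)\<bar> \<le> 2 * L * t"
  unfolding set_lebesgue_integral_def
proof (rule abs_integral_diff_le_bounded[OF finite_M finite_\<mu> sets_M])
  show "(\<lambda>x. indicator D x *\<^sub>R f x) \<in> borel_measurable (M n)"
    by measurable
qed (use close bound \<open>0 \<le> L\<close> in \<open>auto simp: indicator_def sets_M\<close>)

definition gap :: "nat \<Rightarrow> 'a set \<Rightarrow> real" where
  "gap n C = (\<integral>x\<in>C. g n x \<partial>M n) - (\<integral>x\<in>C. f x \<partial>\<mu>)"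

definition deficit :: "nat \<Rightarrow> real \<Rightarrow> 'a set" where
  "deficit n \<epsilon> = {x\<in>space \<mu>. g n x \<le> f x - \<epsilon>}"

definition lower :: "nat \<Rightarrow> real \<Rightarrow> 'a set" where
  "lower n K = {x\<in>space \<mu>. g n x \<le> - K}"

definition neg_tail :: "nat \<Rightarrow> real \<Rightarrow> real" where
  "neg_tail n K = (\<integral>x\<in>lower n K. - g n x \<partial>M n)"

definition f_large :: "real \<Rightarrow> 'a set" where
  "f_large L = {x\<in>space \<mu>. L < \<bar>f x\<bar>}"

lemma deficit_sets [measurable]: "deficit n \<epsilon> \<in> sets \<mu>"
  unfolding deficit_def by measurable

lemma lower_sets [measurable]: "lower n K \<in> sets \<mu>"
  unfolding lower_def by measurable

lemma f_large_sets [measurable]: "f_large L \<in> sets \<mu>"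
  unfolding f_large_def by measurable

lemma gap_Un:
  assumes "A \<in> sets \<mu>" "B \<in> sets \<mu>" "A \<inter> B = {}"
  shows "gap n (A \<union> B) = gap n A + gap n B"
  using assms by (simp add: gap_def set_integral_Un set_integrable_f set_integrable_g)

lemma bdd_below_gap: "bdd_below (gap n ` sets \<mu>)"
proof (rule bdd_belowI2)
  fix C assume "C \<in> sets \<mu>"
  then show "- (\<integral>x. \<bar>g n x\<bar> \<partial>M n) - (\<integral>x. \<bar>f x\<bar> \<partial>\<mu>) \<le> gap n C"
    using abs_set_integral_le_integral_abs[OF integrable_g, of C n]
      abs_set_integral_le_integral_abs[OF integrable_f, of C]
    unfolding gap_def by (simp add: sets_M)
qed

lemma obtain_truncation_level:
  assumes "0 < \<eta>" "0 \<le> K"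
  obtains L where "K \<le> L" "tail_integral \<mu> f L \<le> \<eta>" "L * measure \<mu> (f_large L) \<le> \<eta>"
proof -
  have "\<forall>\<^sub>F L in at_top. tail_integral \<mu> f L < \<eta> \<and> K \<le> L"
    using order_tendstoD(2)[OF tail_integral_tendsto_0[OF integrable_f] \<open>0 < \<eta>\<close>]
    by (intro eventually_conj eventually_ge_at_top)
  then obtain L where L: "tail_integral \<mu> f L < \<eta>" "K \<le> L"
    by (auto simp: eventually_at_top_linorder)
  have "L * measure \<mu> (f_large L) \<le> tail_integral \<mu> f L"
    unfolding f_large_def using L \<open>0 \<le> K\<close> by (intro measure_abs_gt_le_tail_integral integrable_f) simp
  then show thesis
    using L by (intro that) auto
qed

lemma abs_set_integral_f_le_tail:
  assumes C[measurable]: "C \<in> sets \<mu>" and "0 \<le> L"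
  shows "\<bar>\<integral>x\<in>C. f x \<partial>\<mu>\<bar> \<le> tail_integral \<mu> f L + L * measure \<mu> C"
  using set_integral_norm_bound[of \<mu> C f] set_integral_abs_le_tail_integral[OF integrable_f C _ \<open>0 \<le> L\<close>]
    set_integrable_f[OF C]
  by simp

lemma measure_lower_le_neg_tail: "0 \<le> K \<Longrightarrow> K * measure (M n) (lower n K) \<le> neg_tail n K"
  unfolding neg_tail_def
  by (rule measure_mult_le_set_integral) (auto simp: lower_def intro: set_integrable_uminus_g)

lemma neg_tail_le_gap:
  "neg_tail n K \<le> (\<integral>x. \<bar>f x\<bar> \<partial>\<mu>) - gap n (lower n K)"
  "0 \<le> L \<Longrightarrow> neg_tail n K \<le> tail_integral \<mu> f L + L * measure \<mu> (lower n K) - gap n (lower n K)"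
proof -
  have "neg_tail n K = - gap n (lower n K) - (\<integral>x\<in>lower n K. f x \<partial>\<mu>)"
    unfolding neg_tail_def gap_def by (simp add: set_integral_uminus set_integrable_g)
  then show "neg_tail n K \<le> (\<integral>x. \<bar>f x\<bar> \<partial>\<mu>) - gap n (lower n K)"
    and "0 \<le> L \<Longrightarrow> neg_tail n K \<le> tail_integral \<mu> f L + L * measure \<mu> (lower n K) - gap n (lower n K)"
    using abs_set_integral_le_integral_abs[OF integrable_f, of "lower n K"]
      abs_set_integral_f_le_tail[of "lower n K" L] by simp_all
qed

lemma gap_le_if_g_below_f:
  assumes close: "\<forall>C\<in>sets \<mu>. \<bar>measure (M n) C - measure \<mu> C\<bar> \<le> t"
    and D[measurable]: "D \<in> sets \<mu>" and below: "\<And>x. x \<in> D \<Longrightarrow> \<bar>f x\<bar> \<le> L \<and> g n x \<le> f x - \<epsilon>"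
    and "0 \<le> L"
  shows "gap n D \<le> 2 * L * t - \<epsilon> * measure (M n) D"
proof -
  have int_f: "set_integrable (M n) D f"
    using below by (intro set_integrable_M_bounded) auto
  have "\<epsilon> * measure (M n) D \<le> (\<integral>x\<in>D. f x - g n x \<partial>M n)"
    using int_f set_integrable_g[OF D] by (intro measure_mult_le_set_integral) (auto dest: below)
  then have "\<epsilon> * measure (M n) D \<le> (\<integral>x\<in>D. f x \<partial>M n) - (\<integral>x\<in>D. g n x \<partial>M n)"
    using int_f set_integrable_g[OF D] by simp
  moreover have "\<bar>(\<integral>x\<in>D. f x \<partial>M n) - (\<integral>x\<in>D. f x \<partial>\<mu>)\<bar> \<le> 2 * L * t"
    using close below \<open>0 \<le> L\<close> by (intro set_integral_f_transfer D) auto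
  ultimately show ?thesis
    unfolding gap_def by linarith
qed

lemma gap_ge_if_g_above_f:
  assumes close: "\<forall>C\<in>sets \<mu>. \<bar>measure (M n) C - measure \<mu> C\<bar> \<le> t"
    and D[measurable]: "D \<in> sets \<mu>" and above: "\<And>x. x \<in> D \<Longrightarrow> \<bar>f x\<bar> \<le> L \<and> f x - \<eta> \<le> g n x"
    and "0 \<le> L"
  shows "- (2 * L * t) - \<eta> * measure (M n) D \<le> gap n D"
proof -
  have int_f: "set_integrable (M n) D f"
    using above by (intro set_integrable_M_bounded) auto
  have "(\<integral>x\<in>D. f x - g n x \<partial>M n) \<le> \<eta> * measure (M n) D"
    using int_f set_integrable_g[OF D] by (intro set_integral_le_measure_mult) (auto dest: above)
  then have "(\<integral>x\<in>D. f x \<partial>M n) - (\<integral>x\<in>D. g n x \<partial>M n) \<le> \<eta> * measure (M n) D"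
    using int_f set_integrable_g[OF D] by simp
  moreover have "\<bar>(\<integral>x\<in>D. f x \<partial>M n) - (\<integral>x\<in>D. f x \<partial>\<mu>)\<bar> \<le> 2 * L * t"
    using close above \<open>0 \<le> L\<close> by (intro set_integral_f_transfer D) auto
  ultimately show ?thesis
    unfolding gap_def by linarith
qed

lemma gap_ge_neg_tail:
  assumes close: "\<forall>C\<in>sets \<mu>. \<bar>measure (M n) C - measure \<mu> C\<bar> \<le> t"
    and C[measurable]: "C \<in> sets \<mu>" and "0 \<le> K" "K \<le> L"
  shows "- neg_tail n K - K * t - tail_integral \<mu> f L - (K + L) * measure \<mu> C \<le> gap n C"
proof -
  have "(\<integral>x. indicator (lower n K) x * g n x - indicator C x * K \<partial>M n) \<le> (\<integral>x\<in>C. g n x \<partial>M n)"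
    unfolding set_lebesgue_integral_def
  proof (rule integral_mono)
    show "indicator (lower n K) x * g n x - indicator C x * K \<le> indicator C x *\<^sub>R g n x"
      if "x \<in> space (M n)" for x
      using that \<open>0 \<le> K\<close> by (auto simp: lower_def indicator_def)
  qed (use set_integrable_g[OF C] set_integrable_g[of "lower n K"] in \<open>auto simp: set_integrable_def sets_M\<close>)
  also have "(\<integral>x. indicator (lower n K) x * g n x - indicator C x * K \<partial>M n)
      = - neg_tail n K - K * measure (M n) C"
    using set_integrable_g[of "lower n K" n] C
    by (simp add: neg_tail_def set_lebesgue_integral_def set_integrable_def sets_M mult.commute)
  finally have "- neg_tail n K - K * measure (M n) C \<le> (\<integral>x\<in>C. g n x \<partial>M n)" .
  moreover have "K * measure (M n) C \<le> K * measure \<mu> C + K * t"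
    using measure_le_if_close(1)[OF close C] \<open>0 \<le> K\<close> by (simp flip: distrib_left add: mult_left_mono)
  ultimately show ?thesis
    using abs_set_integral_f_le_tail[OF C, of L] assms(3,4) unfolding gap_def by (simp add: distrib_right)
qed

lemma deficit_tendsto_0:
  assumes gap: "\<And>\<delta>. 0 < \<delta> \<Longrightarrow> \<forall>\<^sub>F n in sequentially. \<forall>C\<in>sets \<mu>. - \<delta> < gap n C"
    and "0 < \<epsilon>"
  shows "(\<lambda>n. measure \<mu> (deficit n \<epsilon>)) \<longlonglongrightarrow> 0"
proof (rule tendsto_zero_if_eventually_le)
  fix e :: real assume "0 < e"
  define \<eta> where "\<eta> = e / 4"
  have "0 < \<eta>" "0 < \<epsilon> * \<eta>"
    using \<open>0 < e\<close> \<open>0 < \<epsilon>\<close> by (simp_all add: \<eta>_def)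
  obtain L where "1 \<le> L" and "L * measure \<mu> (f_large L) \<le> \<eta>"
    using obtain_truncation_level[OF \<open>0 < \<eta>\<close>, of 1] by auto
  then have large: "measure \<mu> (f_large L) \<le> \<eta>"
    using mult_right_mono[OF \<open>1 \<le> L\<close> measure_nonneg, of \<mu> "f_large L"] by linarith
  define t where "t = min \<eta> (\<epsilon> * \<eta> / (2 * L))"
  have "0 < t" "t \<le> \<eta>" "2 * L * t \<le> \<epsilon> * \<eta>"
    using \<open>0 < \<eta>\<close> \<open>0 < \<epsilon>\<close> \<open>1 \<le> L\<close> by (auto simp: t_def field_simps min_def)
  from gap[OF \<open>0 < \<epsilon> * \<eta>\<close>] tv_close[OF \<open>0 < t\<close>]
  show "\<forall>\<^sub>F n in sequentially. measure \<mu> (deficit n \<epsilon>) \<le> e"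
  proof eventually_elim
    case (elim n)
    define D where "D = deficit n \<epsilon> - f_large L"
    have D[measurable]: "D \<in> sets \<mu>"
      by (simp add: D_def)
    have "gap n D \<le> 2 * L * t - \<epsilon> * measure (M n) D"
      using elim(2) \<open>1 \<le> L\<close> by (intro gap_le_if_g_below_f D) (auto simp: D_def deficit_def f_large_def)
    moreover have "- (\<epsilon> * \<eta>) < gap n D"
      using elim(1) D by blast
    ultimately have "\<epsilon> * measure (M n) D < \<epsilon> * (2 * \<eta>)"
      using \<open>2 * L * t \<le> \<epsilon> * \<eta>\<close> by linarith
    then have "measure (M n) D < 2 * \<eta>"
      using \<open>0 < \<epsilon>\<close> by simp
    moreover have "measure \<mu> D \<le> measure (M n) D + t"
      using measure_le_if_close(2)[OF elim(2) D] .
    moreover have "measure \<mu> (deficit n \<epsilon>) \<le> measure \<mu> (D \<union> f_large L)"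
      by (intro finite_measure.finite_measure_mono[OF finite_\<mu>]) (auto simp: D_def)
    ultimately show ?case
      using measure_Un_le[OF D f_large_sets, of L] large \<open>t \<le> \<eta>\<close> unfolding \<eta>_def by linarith
  qed
qed simp

lemma neg_tail_le_if_gap_gt:
  assumes close: "\<forall>C\<in>sets \<mu>. \<bar>measure (M n) C - measure \<mu> C\<bar> \<le> t"
    and gap: "- \<delta> < gap n (lower n K)" and "0 < K" "0 \<le> L"
  shows "neg_tail n K \<le> \<delta> + tail_integral \<mu> f L + L * ((\<delta> + (\<integral>x. \<bar>f x\<bar> \<partial>\<mu>)) / K + t)"
proof -
  have "K * measure (M n) (lower n K) \<le> \<delta> + (\<integral>x. \<bar>f x\<bar> \<partial>\<mu>)"
    using measure_lower_le_neg_tail[of K n] neg_tail_le_gap(1)[of n K] gap \<open>0 < K\<close> by linarith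
  then have "measure (M n) (lower n K) \<le> (\<delta> + (\<integral>x. \<bar>f x\<bar> \<partial>\<mu>)) / K"
    using \<open>0 < K\<close> by (simp add: field_simps)
  then have "measure \<mu> (lower n K) \<le> (\<delta> + (\<integral>x. \<bar>f x\<bar> \<partial>\<mu>)) / K + t"
    using measure_le_if_close(2)[OF close lower_sets[of n K]] by linarith
  then have "L * measure \<mu> (lower n K) \<le> L * ((\<delta> + (\<integral>x. \<bar>f x\<bar> \<partial>\<mu>)) / K + t)"
    using \<open>0 \<le> L\<close> by (rule mult_left_mono)
  then show ?thesis
    using neg_tail_le_gap(2)[OF \<open>0 \<le> L\<close>, of n K] gap by linarith
qed

lemma neg_tail_eventually_le:
  assumes gap: "\<And>\<delta>. 0 < \<delta> \<Longrightarrow> \<forall>\<^sub>F n in sequentially. \<forall>C\<in>sets \<mu>. - \<delta> < gap n C"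
    and "0 < \<eta>"
  shows "\<forall>\<^sub>F K in at_top. \<forall>\<^sub>F n in sequentially. neg_tail n K \<le> \<eta>"
proof -
  define \<delta> where "\<delta> = \<eta> / 4"
  have "0 < \<delta>"
    using \<open>0 < \<eta>\<close> by (simp add: \<delta>_def)
  obtain L where "1 \<le> L" and tail: "tail_integral \<mu> f L \<le> \<delta>"
    using obtain_truncation_level[OF \<open>0 < \<delta>\<close>, of 1] by auto
  define F where "F = (\<integral>x. \<bar>f x\<bar> \<partial>\<mu>)"
  have "0 < \<delta> / L"
    using \<open>0 < \<delta>\<close> \<open>1 \<le> L\<close> by simp
  have "\<forall>\<^sub>F K in at_top. max 1 (L * (\<delta> + F) / \<delta>) \<le> K"
    by (rule eventually_ge_at_top)
  then show ?thesis
  proof eventually_elim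
    fix K assume "max 1 (L * (\<delta> + F) / \<delta>) \<le> K"
    then have "0 < K" "L * (\<delta> + F) / K \<le> \<delta>"
      using \<open>0 < \<delta>\<close> by (auto simp: field_simps)
    moreover have "L * ((\<delta> + F) / K + \<delta> / L) = L * (\<delta> + F) / K + \<delta>"
      using \<open>1 \<le> L\<close> by (simp add: distrib_left)
    ultimately have "0 < K" "L * ((\<delta> + F) / K + \<delta> / L) \<le> 2 * \<delta>"
      by simp_all
    from gap[OF \<open>0 < \<delta>\<close>] tv_close[OF \<open>0 < \<delta> / L\<close>]
    show "\<forall>\<^sub>F n in sequentially. neg_tail n K \<le> \<eta>"
    proof eventually_elim
      case (elim n)
      then have "neg_tail n K \<le> \<delta> + tail_integral \<mu> f L + L * ((\<delta> + F) / K + \<delta> / L)"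
        unfolding F_def using \<open>0 < K\<close> \<open>1 \<le> L\<close> by (intro neg_tail_le_if_gap_gt) auto
      then show "neg_tail n K \<le> \<eta>"
        using tail \<open>L * ((\<delta> + F) / K + \<delta> / L) \<le> 2 * \<delta>\<close> unfolding \<delta>_def by linarith
    qed
  qed
qed

lemma gap_ge_split:
  assumes close: "\<forall>C\<in>sets \<mu>. \<bar>measure (M n) C - measure \<mu> C\<bar> \<le> t"
    and "t \<le> 1" "0 \<le> K" "K \<le> L" "0 \<le> \<eta>" and C[measurable]: "C \<in> sets \<mu>"
  shows "- neg_tail n K - K * t - tail_integral \<mu> f L - (K + L) * measure \<mu> (deficit n \<eta>)
    - 2 * L * measure \<mu> (f_large L) - 2 * L * t - \<eta> * (measure \<mu> (space \<mu>) + 1) \<le> gap n C"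
proof -
  define B where "B = deficit n \<eta> \<union> f_large L"
  have [measurable]: "B \<in> sets \<mu>"
    by (simp add: B_def)
  have "C = (C \<inter> B) \<union> (C - B)"
    by blast
  then have "gap n C = gap n (C \<inter> B) + gap n (C - B)"
    using gap_Un[of "C \<inter> B" "C - B" n] by (simp add: Int_Diff_disjoint)
  moreover have "- neg_tail n K - K * t - tail_integral \<mu> f L - (K + L) * measure \<mu> (C \<inter> B) \<le> gap n (C \<inter> B)"
    using close assms(3,4) by (intro gap_ge_neg_tail) auto
  moreover have "(K + L) * measure \<mu> (C \<inter> B) \<le> (K + L) * measure \<mu> (deficit n \<eta>) + 2 * L * measure \<mu> (f_large L)"
  proof -
    have "measure \<mu> (C \<inter> B) \<le> measure \<mu> (deficit n \<eta>) + measure \<mu> (f_large L)"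
      using measure_Un_le[of "deficit n \<eta>" \<mu> "f_large L"] finite_measure.finite_measure_mono[OF finite_\<mu>, of "C \<inter> B" B]
      by (simp add: B_def)
    then have "(K + L) * measure \<mu> (C \<inter> B) \<le> (K + L) * measure \<mu> (deficit n \<eta>) + (K + L) * measure \<mu> (f_large L)"
      using assms(3,4) by (simp add: mult_left_mono flip: distrib_left)
    moreover have "(K + L) * measure \<mu> (f_large L) \<le> 2 * L * measure \<mu> (f_large L)"
      using assms(4) by (intro mult_right_mono) auto
    ultimately show ?thesis
      by linarith
  qed
  moreover have "- (2 * L * t) - \<eta> * measure (M n) (C - B) \<le> gap n (C - B)"
    using close assms(3,4) sets.sets_into_space[OF C]
    by (intro gap_ge_if_g_above_f) (auto simp: B_def deficit_def f_large_def)
  moreover have "\<eta> * measure (M n) (C - B) \<le> \<eta> * (measure \<mu> (space \<mu>) + 1)"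
  proof (rule mult_left_mono[OF _ \<open>0 \<le> \<eta>\<close>])
    have "C - B \<in> sets \<mu>"
      by measurable
    then have "measure (M n) (C - B) \<le> measure \<mu> (C - B) + t"
      by (rule measure_le_if_close(1)[OF close])
    then show "measure (M n) (C - B) \<le> measure \<mu> (space \<mu>) + 1"
      using finite_measure.bounded_measure[OF finite_\<mu>, of "C - B"] \<open>t \<le> 1\<close> by linarith
  qed
  ultimately show ?thesis
    by linarith
qed

lemma obtain_cutoffs:
  assumes neg_tail: "\<forall>\<^sub>F K in at_top. \<forall>\<^sub>F n in sequentially. neg_tail n K \<le> \<eta>" and "0 < \<eta>"
  obtains K L where "1 \<le> K" "K \<le> L" "\<forall>\<^sub>F n in sequentially. neg_tail n K \<le> \<eta>"
    "tail_integral \<mu> f L \<le> \<eta>" "L * measure \<mu> (f_large L) \<le> \<eta>"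
proof -
  have "\<exists>K. (\<forall>\<^sub>F n in sequentially. neg_tail n K \<le> \<eta>) \<and> 1 \<le> K"
    using eventually_conj[OF neg_tail eventually_ge_at_top[of 1]] by (rule eventually_happens'[rotated]) simp
  then obtain K where "1 \<le> K" "\<forall>\<^sub>F n in sequentially. neg_tail n K \<le> \<eta>"
    by blast
  moreover obtain L where "K \<le> L" "tail_integral \<mu> f L \<le> \<eta>" "L * measure \<mu> (f_large L) \<le> \<eta>"
    using obtain_truncation_level[OF \<open>0 < \<eta>\<close>, of K] \<open>1 \<le> K\<close> by auto
  ultimately show thesis
    using that by blast
qed

lemma gap_eventually_gt:
  assumes deficit: "\<And>\<epsilon>. 0 < \<epsilon> \<Longrightarrow> (\<lambda>n. measure \<mu> (deficit n \<epsilon>)) \<longlonglongrightarrow> 0"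
    and neg_tail: "\<And>\<eta>. 0 < \<eta> \<Longrightarrow> \<forall>\<^sub>F K in at_top. \<forall>\<^sub>F n in sequentially. neg_tail n K \<le> \<eta>"
    and "0 < \<delta>"
  shows "\<forall>\<^sub>F n in sequentially. \<forall>C\<in>sets \<mu>. - \<delta> < gap n C"
proof -
  define S where "S = measure \<mu> (space \<mu>)"
  define \<eta> where "\<eta> = \<delta> / (8 + S)"
  have "0 \<le> S"
    by (simp add: S_def)
  then have "0 < \<eta>" "(15 / 2 + S) * \<eta> < \<delta>"
    using \<open>0 < \<delta>\<close> by (auto simp: \<eta>_def field_simps)
  obtain K L where "1 \<le> K" "K \<le> L" and neg_tail_K: "\<forall>\<^sub>F n in sequentially. neg_tail n K \<le> \<eta>"
    and tail: "tail_integral \<mu> f L \<le> \<eta>" and large: "L * measure \<mu> (f_large L) \<le> \<eta>"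
    using obtain_cutoffs[OF neg_tail \<open>0 < \<eta>\<close>] \<open>0 < \<eta>\<close> by blast
  define t where "t = min 1 (\<eta> / (2 * L))"
  have "0 < t" "t \<le> 1" "2 * L * t \<le> \<eta>" "K * t \<le> L * t"
    using \<open>0 < \<eta>\<close> \<open>1 \<le> K\<close> \<open>K \<le> L\<close> by (auto simp: t_def min_def field_simps)
  have "\<forall>\<^sub>F n in sequentially. measure \<mu> (deficit n \<eta>) < \<eta> / (K + L)"
    using \<open>1 \<le> K\<close> \<open>K \<le> L\<close> \<open>0 < \<eta>\<close>
    by (intro order_tendstoD(2)[OF deficit[OF \<open>0 < \<eta>\<close>]]) simp
  with neg_tail_K tv_close[OF \<open>0 < t\<close>]
  show ?thesis
  proof eventually_elim
    case (elim n)
    have "(K + L) * measure \<mu> (deficit n \<eta>) < \<eta>"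
      using elim(3) \<open>1 \<le> K\<close> \<open>K \<le> L\<close> by (simp add: field_simps)
    show ?case
    proof
      fix C assume "C \<in> sets \<mu>"
      with \<open>(K + L) * measure \<mu> (deficit n \<eta>) < \<eta>\<close> show "- \<delta> < gap n C"
        using gap_ge_split[OF elim(2) \<open>t \<le> 1\<close> _ \<open>K \<le> L\<close>, of \<eta> C] elim(1) tail large \<open>1 \<le> K\<close>
          \<open>0 < \<eta>\<close> \<open>2 * L * t \<le> \<eta>\<close> \<open>K * t \<le> L * t\<close> \<open>(15 / 2 + S) * \<eta> < \<delta>\<close>
        unfolding S_def by (simp add: algebra_simps)
    qed
  qed
qed

theorem gap_eventually_gt_iff:
  "(\<forall>\<delta>>0. \<forall>\<^sub>F n in sequentially. \<forall>C\<in>sets \<mu>. - \<delta> < gap n C) \<longleftrightarrow>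
    (\<forall>\<epsilon>>0. (\<lambda>n. measure \<mu> (deficit n \<epsilon>)) \<longlonglongrightarrow> 0) \<and>
    (\<forall>\<eta>>0. \<forall>\<^sub>F K in at_top. \<forall>\<^sub>F n in sequentially. neg_tail n K \<le> \<eta>)"
  using deficit_tendsto_0 neg_tail_eventually_le gap_eventually_gt by blast

end

section \<open>Extended-real integrands\<close>

lemma ereal_L1_integrable: "ereal_L1 M f \<Longrightarrow> integrable M (\<lambda>x. real_of_ereal (f x))"
proof (rule integrableI_bounded)
  assume L1: "ereal_L1 M f"
  then show "(\<lambda>x. real_of_ereal (f x)) \<in> borel_measurable M"
    by (auto simp: ereal_L1_def intro: borel_measurable_real_of_ereal)
  have "ennreal (real_of_ereal \<bar>y\<bar>) \<le> e2ennreal \<bar>y\<bar>" for y :: ereal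
    by (cases y) auto
  then have "(\<integral>\<^sup>+ x. ennreal (norm (real_of_ereal (f x))) \<partial>M) \<le> (\<integral>\<^sup>+ x. e2ennreal \<bar>f x\<bar> \<partial>M)"
    by (intro nn_integral_mono) simp
  then show "(\<integral>\<^sup>+ x. ennreal (norm (real_of_ereal (f x))) \<partial>M) < \<infinity>"
    using L1 unfolding ereal_L1_def by (auto intro: order.strict_trans1)
qed

lemma ereal_L1_AE_finite: "ereal_L1 M f \<Longrightarrow> AE x in M. \<bar>f x\<bar> \<noteq> \<infinity>"
proof -
  assume L1: "ereal_L1 M f"
  then have "AE x in M. e2ennreal \<bar>f x\<bar> \<noteq> \<infinity>"
    unfolding ereal_L1_def by (intro nn_integral_noteq_infinite) auto
  then show ?thesis
    by eventually_elim (auto simp: e2ennreal_infty)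
qed

lemma ereal_L1_measure_infinite: "ereal_L1 M f \<Longrightarrow> measure M {x\<in>space M. \<bar>f x\<bar> = \<infinity>} = 0"
proof -
  assume L1: "ereal_L1 M f"
  then have [measurable]: "f \<in> borel_measurable M"
    by (simp add: ereal_L1_def)
  have "emeasure M {x\<in>space M. \<bar>f x\<bar> = \<infinity>} = 0"
    using ereal_L1_AE_finite[OF L1] by (subst (asm) AE_iff_measurable[OF _ refl]) auto
  then show ?thesis
    by (simp add: measure_def)
qed

lemma abs_measure_diff_le_if_eq_outside:
  assumes "finite_measure M" "A \<in> sets M" "B \<in> sets M" "N \<in> sets M"
    and eq: "\<And>x. x \<notin> N \<Longrightarrow> x \<in> A \<longleftrightarrow> x \<in> B"
  shows "\<bar>measure M A - measure M B\<bar> \<le> measure M N"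
proof -
  interpret finite_measure M by fact
  have "measure M A \<le> measure M (B \<union> N)" "measure M B \<le> measure M (A \<union> N)"
    using assms eq by (auto intro!: finite_measure_mono)
  then show ?thesis
    using measure_Un_le[of B M N] measure_Un_le[of A M N] assms by linarith
qed

lemma liminf_INF_nonneg_iff:
  fixes X :: "nat \<Rightarrow> 'b \<Rightarrow> real"
  assumes "A \<noteq> {}" and bdd: "\<And>n. bdd_below (X n ` A)"
  shows "0 \<le> liminf (\<lambda>n. ereal (INF a\<in>A. X n a)) \<longleftrightarrow> (\<forall>\<delta>>0. \<forall>\<^sub>F n in sequentially. \<forall>a\<in>A. - \<delta> < X n a)"
  unfolding le_Liminf_iff
proof safe
  fix \<delta> :: real
  assume upper: "\<forall>y<0. \<forall>\<^sub>F n in sequentially. y < ereal (INF a\<in>A. X n a)" and "0 < \<delta>"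
  have "\<forall>\<^sub>F n in sequentially. ereal (- \<delta>) < ereal (INF a\<in>A. X n a)"
    using upper[rule_format, of "ereal (- \<delta>)"] \<open>0 < \<delta>\<close> by simp
  then have "\<forall>\<^sub>F n in sequentially. - \<delta> < (INF a\<in>A. X n a)"
    by simp
  then show "\<forall>\<^sub>F n in sequentially. \<forall>a\<in>A. - \<delta> < X n a"
    by eventually_elim (use bdd in \<open>auto intro: order.strict_trans2 cINF_lower\<close>)
next
  fix y :: ereal assume lower: "\<forall>\<delta>>0. \<forall>\<^sub>F n in sequentially. \<forall>a\<in>A. - \<delta> < X n a" and "y < 0"
  obtain z where "y < ereal z" "z < 0"
    using ereal_dense2[OF \<open>y < 0\<close>] by auto
  have "\<forall>\<^sub>F n in sequentially. \<forall>a\<in>A. z < X n a"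
    using lower[rule_format, of "- z"] \<open>z < 0\<close> by simp
  then show "\<forall>\<^sub>F n in sequentially. y < ereal (INF a\<in>A. X n a)"
  proof eventually_elim
    case (elim n)
    then have "z \<le> (INF a\<in>A. X n a)"
      using \<open>A \<noteq> {}\<close> by (auto intro: cINF_greatest less_imp_le)
    then show ?case
      using \<open>y < ereal z\<close> by (auto intro: order.strict_trans2)
  qed
qed

lemma tendsto_limsup_zero_iff:
  fixes u :: "nat \<Rightarrow> 'b \<Rightarrow> ennreal"
  shows "((\<lambda>K. limsup (\<lambda>n. u n K)) \<longlongrightarrow> 0) F
    \<longleftrightarrow> (\<forall>\<eta>>0. \<forall>\<^sub>F K in F. \<forall>\<^sub>F n in sequentially. u n K \<le> ennreal \<eta>)"
proof safe
  fix \<eta> :: real assume "((\<lambda>K. limsup (\<lambda>n. u n K)) \<longlongrightarrow> 0) F" "0 < \<eta>"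
  then have "\<forall>\<^sub>F K in F. limsup (\<lambda>n. u n K) < ennreal \<eta>"
    by (intro order_tendstoD(2)) auto
  then show "\<forall>\<^sub>F K in F. \<forall>\<^sub>F n in sequentially. u n K \<le> ennreal \<eta>"
    by eventually_elim (use Limsup_lessD in \<open>fastforce elim: eventually_mono\<close>)
next
  assume small: "\<forall>\<eta>>0. \<forall>\<^sub>F K in F. \<forall>\<^sub>F n in sequentially. u n K \<le> ennreal \<eta>"
  show "((\<lambda>K. limsup (\<lambda>n. u n K)) \<longlongrightarrow> 0) F"
  proof (rule order_tendstoI)
    fix a :: ennreal assume "0 < a"
    then obtain b where "0 < b" "b < a"
      using dense by blast
    define \<eta> where "\<eta> = enn2real b"
    have "b < top"
      using \<open>b < a\<close> top.not_eq_extremum by fastforce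
    then have "0 < \<eta>" "ennreal \<eta> < a"
      using \<open>0 < b\<close> \<open>b < a\<close> by (auto simp: \<eta>_def enn2real_positive_iff)
    from small[rule_format, OF \<open>0 < \<eta>\<close>]
    show "\<forall>\<^sub>F K in F. limsup (\<lambda>n. u n K) < a"
      by eventually_elim (use \<open>ennreal \<eta> < a\<close> in \<open>auto intro: order.strict_trans1 Limsup_bounded\<close>)
  qed simp
qed

lemma tendsto_zero_iff_if_close:
  fixes X Y Z :: "nat \<Rightarrow> real"
  assumes "\<And>n. \<bar>X n - Y n\<bar> \<le> Z n" and "Z \<longlonglongrightarrow> 0"
  shows "X \<longlonglongrightarrow> 0 \<longleftrightarrow> Y \<longlonglongrightarrow> 0"
proof -
  have "\<forall>\<^sub>F n in sequentially. norm (X n - Y n) \<le> Z n"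
    using assms(1) by simp
  then have diff: "(\<lambda>n. X n - Y n) \<longlonglongrightarrow> 0"
    using assms(2) by (rule Lim_null_comparison)
  show ?thesis
  proof
    assume "X \<longlonglongrightarrow> 0"
    from tendsto_diff[OF this diff] show "Y \<longlonglongrightarrow> 0"
      by simp
  next
    assume "Y \<longlonglongrightarrow> 0"
    from tendsto_add[OF diff this] show "X \<longlonglongrightarrow> 0"
      by simp
  qed
qed

locale tv_fatou_ereal =
  fixes M :: "nat \<Rightarrow> 'a measure" and \<mu> :: "'a measure"
    and f :: "'a \<Rightarrow> ereal" and fn :: "nat \<Rightarrow> 'a \<Rightarrow> ereal"
  assumes sets_M: "\<And>n. sets (M n) = sets \<mu>"
    and finite_M: "\<And>n. finite_measure (M n)" and finite_\<mu>: "finite_measure \<mu>"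
    and tv: "tv_converges M \<mu>"
    and f_L1: "ereal_L1 \<mu> f" and fn_L1: "\<And>n. ereal_L1 (M n) (fn n)"
begin

sublocale real: tv_fatou M \<mu> "\<lambda>x. real_of_ereal (f x)" "\<lambda>n x. real_of_ereal (fn n x)"
  using sets_M finite_M finite_\<mu> tv ereal_L1_integrable[OF f_L1] ereal_L1_integrable[OF fn_L1]
  by (simp add: tv_fatou_def)

lemma measurable_f [measurable]: "f \<in> borel_measurable \<mu>"
  using f_L1 by (simp add: ereal_L1_def)

lemma measurable_fn [measurable]: "fn n \<in> borel_measurable \<mu>"
  using fn_L1[of n] by (simp add: ereal_L1_def measurable_cong_sets[OF sets_M refl])

lemma liminf_gap_nonneg_iff:
  "0 \<le> liminf (\<lambda>n. ereal (INF C\<in>sets \<mu>. ereal_set_integral (M n) C (fn n) - ereal_set_integral \<mu> C f))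
    \<longleftrightarrow> (\<forall>\<delta>>0. \<forall>\<^sub>F n in sequentially. \<forall>C\<in>sets \<mu>. - \<delta> < real.gap n C)"
proof -
  have "ereal_set_integral (M n) C (fn n) - ereal_set_integral \<mu> C f = real.gap n C" for n C
    by (simp add: ereal_set_integral_def real.gap_def)
  moreover have "sets \<mu> \<noteq> {}"
    using sets.empty_sets by blast
  ultimately show ?thesis
    using liminf_INF_nonneg_iff[of "sets \<mu>" real.gap] real.bdd_below_gap by simp
qed

text \<open>The integrand \<open>fn n\<close> is finite only \<open>M n\<close>-almost everywhere, so passing to real parts
  changes the sets in (i) by \<open>M n\<close>-null sets, whose \<open>\<mu>\<close>-measure tends to 0 only by
  convergence in total variation.\<close>

lemma abs_measure_deficit_diff_le:
  "\<bar>measure \<mu> {s\<in>space \<mu>. fn n s \<le> f s - ereal \<epsilon>} - measure \<mu> (real.deficit n \<epsilon>)\<bar>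
    \<le> measure \<mu> {x\<in>space \<mu>. \<bar>fn n x\<bar> = \<infinity>}"
proof -
  define A where "A = {x\<in>space \<mu>. \<bar>fn n x\<bar> = \<infinity>}"
  define F where "F = {x\<in>space \<mu>. \<bar>f x\<bar> = \<infinity>}"
  have [measurable]: "A \<in> sets \<mu>" "F \<in> sets \<mu>"
    unfolding A_def F_def by measurable
  have "\<bar>measure \<mu> {s\<in>space \<mu>. fn n s \<le> f s - ereal \<epsilon>} - measure \<mu> (real.deficit n \<epsilon>)\<bar>
      \<le> measure \<mu> (A \<union> F)"
  proof (rule abs_measure_diff_le_if_eq_outside[OF finite_\<mu>])
    fix x assume "x \<notin> A \<union> F"
    then show "x \<in> {s\<in>space \<mu>. fn n s \<le> f s - ereal \<epsilon>} \<longleftrightarrow> x \<in> real.deficit n \<epsilon>"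
      by (cases "fn n x"; cases "f x") (auto simp: A_def F_def real.deficit_def)
  qed auto
  also have "\<dots> \<le> measure \<mu> A"
    using measure_Un_le[of A \<mu> F] ereal_L1_measure_infinite[OF f_L1] by (simp add: F_def)
  finally show ?thesis
    unfolding A_def .
qed

lemma deficit_tendsto_0_iff:
  "(\<lambda>n. measure \<mu> {s\<in>space \<mu>. fn n s \<le> f s - ereal \<epsilon>}) \<longlonglongrightarrow> 0
    \<longleftrightarrow> (\<lambda>n. measure \<mu> (real.deficit n \<epsilon>)) \<longlonglongrightarrow> 0"
proof (rule tendsto_zero_iff_if_close[OF abs_measure_deficit_diff_le])
  show "(\<lambda>n. measure \<mu> {x\<in>space \<mu>. \<bar>fn n x\<bar> = \<infinity>}) \<longlonglongrightarrow> 0"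
    using ereal_L1_measure_infinite[OF fn_L1] by (intro real.measure_tendsto_0_if_null) auto
qed

lemma nn_integral_neg_part_eq_neg_tail:
  assumes "0 < K"
  shows "(\<integral>\<^sup>+x\<in>{x\<in>space \<mu>. \<bar>neg_part (fn n) x\<bar> \<ge> ereal K}. e2ennreal \<bar>neg_part (fn n) x\<bar> \<partial>M n)
    = ennreal (real.neg_tail n K)"
proof -
  let ?h = "\<lambda>x. indicator (real.lower n K) x * - real_of_ereal (fn n x)"
  have "(\<integral>\<^sup>+x\<in>{x\<in>space \<mu>. \<bar>neg_part (fn n) x\<bar> \<ge> ereal K}. e2ennreal \<bar>neg_part (fn n) x\<bar> \<partial>M n)
      = (\<integral>\<^sup>+x. ennreal (?h x) \<partial>M n)"
  proof (rule nn_integral_cong_AE)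
    show "AE x in M n. e2ennreal \<bar>neg_part (fn n) x\<bar> * indicator {x\<in>space \<mu>. \<bar>neg_part (fn n) x\<bar> \<ge> ereal K} x
        = ennreal (?h x)"
      using ereal_L1_AE_finite[OF fn_L1[of n]]
    proof eventually_elim
      case (elim x)
      then obtain r where "fn n x = ereal r"
        by (cases "fn n x") auto
      then show ?case
        using \<open>0 < K\<close> by (auto simp: neg_part_def real.lower_def indicator_def min_def)
    qed
  qed
  also have "\<dots> = ennreal (\<integral>x. ?h x \<partial>M n)"
  proof (rule nn_integral_eq_integral)
    show "integrable (M n) ?h"
      using real.set_integrable_uminus_g[of "real.lower n K" n] by (simp add: set_integrable_def)
    show "AE x in M n. 0 \<le> ?h x"
      using \<open>0 < K\<close> by (intro AE_I2) (auto simp: real.lower_def indicator_def simp del: real_of_ereal_le_0)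
  qed
  finally show ?thesis
    by (simp add: real.neg_tail_def set_lebesgue_integral_def)
qed

lemma asymp_unif_integrable_neg_part_iff:
  "asymp_unif_integrable M (\<lambda>n. neg_part (fn n))
    \<longleftrightarrow> (\<forall>\<eta>>0. \<forall>\<^sub>F K in at_top. \<forall>\<^sub>F n in sequentially. real.neg_tail n K \<le> \<eta>)"
  unfolding asymp_unif_integrable_def tendsto_limsup_zero_iff
proof (intro all_cong1 imp_cong refl eventually_subst)
  fix \<eta> :: real assume "0 < \<eta>"
  show "\<forall>\<^sub>F K in at_top.
      (\<forall>\<^sub>F n in sequentially. (\<integral>\<^sup>+x\<in>{x\<in>space (M n). \<bar>neg_part (fn n) x\<bar> \<ge> ereal K}.
          e2ennreal \<bar>neg_part (fn n) x\<bar> \<partial>M n) \<le> ennreal \<eta>)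
    = (\<forall>\<^sub>F n in sequentially. real.neg_tail n K \<le> \<eta>)"
    using eventually_gt_at_top[of 0]
    by eventually_elim (use \<open>0 < \<eta>\<close> in \<open>simp add: nn_integral_neg_part_eq_neg_tail ennreal_le_iff\<close>)
qed

end

theorem proposition4p1:
  fixes M :: "nat \<Rightarrow> 'a measure" and \<mu> :: "'a measure"
    and f :: "'a \<Rightarrow> ereal" and fn :: "nat \<Rightarrow> 'a \<Rightarrow> ereal"
  assumes sets_M: "\<And>n. sets (M n) = sets \<mu>"
    and fin_M: "\<And>n. finite_measure (M n)"
    and fin_mu: "finite_measure \<mu>"
    and tv: "tv_converges M \<mu>"
    and f_L1: "ereal_L1 \<mu> f"
    and fn_L1: "\<And>n. ereal_L1 (M n) (fn n)"
  shows "liminf (\<lambda>n. ereal (INF C\<in>sets \<mu>.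
              ereal_set_integral (M n) C (fn n) - ereal_set_integral \<mu> C f)) \<ge> 0
     \<longleftrightarrow> ((\<forall>\<epsilon>>0. (\<lambda>n. measure \<mu> {s\<in>space \<mu>. fn n s \<le> f s - ereal \<epsilon>}) \<longlonglongrightarrow> 0)
          \<and> asymp_unif_integrable M (\<lambda>n. neg_part (fn n)))"
proof -
  interpret tv_fatou_ereal M \<mu> f fn
    by (rule tv_fatou_ereal.intro) (fact sets_M fin_M fin_mu tv f_L1 fn_L1)+
  show ?thesis
    unfolding liminf_gap_nonneg_iff deficit_tendsto_0_iff asymp_unif_integrable_neg_part_iff
    by (rule real.gap_eventually_gt_iff)
qed

end
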